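(* Assume that $\hat{s}(X)$ is continuously distributed. Let $i\neq j$ be two indices such that $X_{2n+i}$ and $X_{2n+j}$ are inliers, i.e. they are drawn i.i.d. from $P_X$, independently of $\mathcal{D}$. Then, for any finite-valued function $G:[0,1]\to\mathbb{R}$, \[\mathrm{Cor}\left[ G(\hat{u}^{\mathrm{(marg)}}(X_{2n+i})), G(\hat{u}^{\mathrm{(marg)}}(X_{2n+j})) \right] = \frac{1}{n+2}.\]
   Context: Setting: $P_X$ is a distribution on $\mathbb{R}^d$. Data $X_1,\dots,X_{2n}$ are i.i.d. from $P_X$; the training set $\mathcal{D}^{\mathrm{train}}=\{X_1,\dots,X_n\}$ is treated as fixed (all probabilities are conditional on it) and $\mathcal{D}^{\mathrm{cal}}=\{X_{n+1},\dots,X_{2n}\}$ is the calibration set; $\mathcal{D}=\mathcal{D}^{\mathrm{train}}\cup\mathcal{D}^{\mathrm{cal}}$. The score function $\hat s:\mathbb{R}^d\to\mathbb{R}$ is a fixed function determined by $\mathcal{D}^{\mathrm{train}}$. The marginal conformal p-value of a point $x$ is \[\hat{u}^{\mathrm{(marg)}}(x) = \frac{1 + |\{i \in \{n+1,\dots,2n\} : \hat{s}(X_i) \le \hat{s}(x)\}|}{n+1}.\] "$\hat s(X)$ is continuously distributed" means that for $X\sim P_X$ independent of the data, $\hat s(X)$ has an atomless distribution. *)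

theory Defs
  imports "HOL-Probability.Probability"
begin

text \<open>Marginal conformal p-value of a point x, computed from the calibration
  scores s(X_{n+1} w), ..., s(X_{2n} w).\<close>
definition umarg :: "nat \<Rightarrow> ('x \<Rightarrow> real) \<Rightarrow> (nat \<Rightarrow> 'w \<Rightarrow> 'x) \<Rightarrow> 'w \<Rightarrow> 'x \<Rightarrow> real" where
  "umarg n s X w x =
     (1 + real (card {k \<in> {n+1..2*n}. s (X k w) \<le> s x})) / (real n + 1)"

definition covar :: "'w measure \<Rightarrow> ('w \<Rightarrow> real) \<Rightarrow> ('w \<Rightarrow> real) \<Rightarrow> real" where
  "covar M Y Z = (\<integral>w. (Y w - (\<integral>v. Y v \<partial>M)) * (Z w - (\<integral>v. Z v \<partial>M)) \<partial>M)"

definition correl :: "'w measure \<Rightarrow> ('w \<Rightarrow> real) \<Rightarrow> ('w \<Rightarrow> real) \<Rightarrow> real" where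
  "correl M Y Z = covar M Y Z / sqrt (covar M Y Y * covar M Z Z)"

end

theory Submission
  imports Defs "HOL-Combinatorics.Transposition"
begin

(* The scores s(X_k) of the n calibration points and of the two test points are i.i.d. with an
   atomless law, so almost surely they are pairwise distinct and their joint law is invariant
   under permutations of the indices. Hence the ranks of the two test scores among all n + 2
   scores form a uniformly distributed ordered pair of distinct ranks. The conformal rank
   (n + 1) * u(x) of a test point only counts calibration scores, so it is its full rank minus
   one exactly when the other test score is smaller. Consequently the two conformal ranks R, R'
   satisfy P(R = k, R' = l) = (1 + [k = l]) / ((n + 1)(n + 2)) on {1..n+1}^2. Both marginals are
   uniform, and with S the centred sum of squares of g k = G (k / (n + 1)) over the grid, the
   covariance of g R and g R' is S / ((n + 1)(n + 2)) while each variance is S / (n + 1). *)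

definition score_rank :: "'i set \<Rightarrow> ('i \<Rightarrow> real) \<Rightarrow> 'i \<Rightarrow> nat" where
  "score_rank I y m = card {m'\<in>I. y m' \<le> y m}"

definition conformal_rank :: "'i set \<Rightarrow> ('i \<Rightarrow> real) \<Rightarrow> 'i \<Rightarrow> nat" where
  "conformal_rank Cal y m = 1 + card {c\<in>Cal. y c \<le> y m}"

lemma score_rank_less:
  assumes "finite I" "u \<in> I" "v \<in> I" "y u < y v"
  shows "score_rank I y u < score_rank I y v"
proof -
  have "{m'\<in>I. y m' \<le> y u} \<subseteq> {m'\<in>I. y m' \<le> y v}" "v \<notin> {m'\<in>I. y m' \<le> y u}"
    using assms(4) by auto
  then have "{m'\<in>I. y m' \<le> y u} \<subset> {m'\<in>I. y m' \<le> y v}"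
    using assms(3) by blast
  then show ?thesis
    unfolding score_rank_def using assms(1) by (intro psubset_card_mono) auto
qed

lemma bij_betw_score_rank:
  assumes "finite I" "inj_on y I"
  shows "bij_betw (score_rank I y) I {1..card I}"
proof -
  have inj: "inj_on (score_rank I y) I"
  proof (rule inj_onI)
    fix u v assume uv: "u \<in> I" "v \<in> I" "score_rank I y u = score_rank I y v"
    then have "\<not> y u < y v" "\<not> y v < y u"
      using score_rank_less[OF assms(1)] by (metis less_irrefl)+
    then show "u = v" using assms(2) uv by (auto dest: inj_onD)
  qed
  have "score_rank I y ` I \<subseteq> {1..card I}"
  proof
    fix r assume "r \<in> score_rank I y ` I"
    then obtain m where "m \<in> I" "r = score_rank I y m" by blast
    moreover have "{m'\<in>I. y m' \<le> y m} \<subseteq> I" by blast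
    ultimately show "r \<in> {1..card I}"
      unfolding score_rank_def using assms(1)
      by (auto intro!: card_mono simp: Suc_le_eq card_gt_0_iff)
  qed
  moreover have "card (score_rank I y ` I) = card {1..card I}"
    using inj by (simp add: card_image)
  ultimately show ?thesis
    using inj by (simp add: bij_betw_def card_subset_eq)
qed

lemma score_rank_reindex:
  assumes "bij_betw \<pi> I I" "m \<in> I"
  shows "score_rank I (\<lambda>k\<in>I. y (\<pi> k)) m = score_rank I y (\<pi> m)"
proof -
  have "{m'\<in>I. y m' \<le> y (\<pi> m)} = \<pi> ` {m'\<in>I. y (\<pi> m') \<le> y (\<pi> m)}"
    using assms(1) by (auto simp: bij_betw_def)
  moreover have "inj_on \<pi> {m'\<in>I. y (\<pi> m') \<le> y (\<pi> m)}"
    using assms(1) by (auto simp: bij_betw_def intro: inj_on_subset)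
  ultimately show ?thesis
    unfolding score_rank_def using assms(2) by (simp add: card_image cong: conj_cong)
qed

lemma sum_offdiag_score_rank:
  assumes "finite I" "inj_on y I" "p \<in> {1..card I}" "q \<in> {1..card I}" "p \<noteq> q"
  shows "(\<Sum>d\<in>Sigma I (\<lambda>u. I - {u}).
    of_bool (score_rank I y (fst d) = p \<and> score_rank I y (snd d) = q)) = (1::real)"
proof -
  have bij: "bij_betw (score_rank I y) I {1..card I}" by (rule bij_betw_score_rank[OF assms(1,2)])
  then obtain u v where uv: "u \<in> I" "v \<in> I" "score_rank I y u = p" "score_rank I y v = q"
    using assms(3,4) by (metis bij_betw_iff_bijections)
  have "Sigma I (\<lambda>u. I - {u}) \<inter> {d. score_rank I y (fst d) = p \<and> score_rank I y (snd d) = q} = {(u, v)}"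
    using uv assms(5) bij by (auto simp: bij_betw_def dest: inj_onD)
  then show ?thesis
    using assms(1) by simp
qed

lemma card_offdiag:
  assumes "finite I"
  shows "card (Sigma I (\<lambda>u. I - {u})) = card I * (card I - 1)"
  using assms by (simp add: card_Diff_singleton)

lemma exists_bij_betw_pair:
  assumes "a \<in> I" "b \<in> I" "a \<noteq> b" "m \<in> I" "m' \<in> I" "m \<noteq> m'"
  shows "\<exists>\<pi>. bij_betw \<pi> I I \<and> \<pi> a = m \<and> \<pi> b = m'"
proof -
  define \<sigma> where "\<sigma> = Transposition.transpose a m"
  define \<tau> where "\<tau> = Transposition.transpose (\<sigma> b) m'"
  have "\<sigma> b \<in> I" "\<sigma> b \<noteq> m" using assms unfolding \<sigma>_def by (auto simp: Transposition.transpose_def)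
  then have "bij_betw (\<tau> \<circ> \<sigma>) I I"
    unfolding \<tau>_def \<sigma>_def using assms by (intro bij_betw_trans[where B = I] bij_betw_transpose_iff) auto
  moreover have "(\<tau> \<circ> \<sigma>) a = m" "(\<tau> \<circ> \<sigma>) b = m'"
    using \<open>\<sigma> b \<noteq> m\<close> assms unfolding \<tau>_def \<sigma>_def by (auto simp: Transposition.transpose_def)
  ultimately show ?thesis by blast
qed

lemma conformal_rank_mem:
  assumes "finite Cal"
  shows "conformal_rank Cal y m \<in> {1..card Cal + 1}"
  unfolding conformal_rank_def using assms by (auto intro: card_mono)

lemma conformal_rank_mono:
  assumes "finite Cal" "y u \<le> y v"
  shows "conformal_rank Cal y u \<le> conformal_rank Cal y v"
  unfolding conformal_rank_def using assms by (auto intro: card_mono)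

lemma score_rank_eq_conformal_rank:
  assumes "finite Cal" "a \<notin> Cal" "b \<notin> Cal" "y a \<noteq> y b"
  shows "score_rank (Cal \<union> {a, b}) y a = conformal_rank Cal y a + of_bool (y b < y a)"
proof -
  have "{m\<in>Cal \<union> {a, b}. y m \<le> y a} = insert a ({c\<in>Cal. y c \<le> y a} \<union> (if y b < y a then {b} else {}))"
    using assms(4) by auto
  then show ?thesis
    unfolding score_rank_def conformal_rank_def using assms by (simp add: card_insert_if)
qed

lemma conformal_rank_pair_iff:
  assumes "finite Cal" "a \<notin> Cal" "b \<notin> Cal" "y a \<noteq> y b" and I: "I = Cal \<union> {a, b}"
  shows "(conformal_rank Cal y a = k \<and> conformal_rank Cal y b = l) \<longleftrightarrow>
    (k \<le> l \<and> score_rank I y a = k \<and> score_rank I y b = l + 1) \<or>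
    (l \<le> k \<and> score_rank I y a = k + 1 \<and> score_rank I y b = l)"
proof -
  have "score_rank I y a = conformal_rank Cal y a + of_bool (y b < y a)"
    "score_rank I y b = conformal_rank Cal y b + of_bool (y a < y b)"
    using score_rank_eq_conformal_rank[OF assms(1-4)] score_rank_eq_conformal_rank[OF assms(1,3,2)] assms(4)
    unfolding I by (auto simp: insert_commute)
  moreover have "y a < y b \<Longrightarrow> conformal_rank Cal y a \<le> conformal_rank Cal y b"
    "y b < y a \<Longrightarrow> conformal_rank Cal y b \<le> conformal_rank Cal y a"
    using conformal_rank_mono[OF assms(1)] by auto
  ultimately show ?thesis using assms(4) by (cases "y a < y b") auto
qed

definition conformal_pair_prob :: "nat \<Rightarrow> nat \<Rightarrow> nat \<Rightarrow> real" where
  "conformal_pair_prob n k l = (if k = l then 2 else 1) / ((real n + 2) * (real n + 1))"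

lemma sum_conformal_pair_prob:
  fixes n :: nat and f :: "nat \<Rightarrow> nat \<Rightarrow> real"
  defines "K \<equiv> {1..n + 1}"
  shows "(\<Sum>k\<in>K. \<Sum>l\<in>K. f k l * conformal_pair_prob n k l) =
    ((\<Sum>k\<in>K. \<Sum>l\<in>K. f k l) + (\<Sum>k\<in>K. f k k)) / ((real n + 2) * (real n + 1))"
proof -
  have "f k l * conformal_pair_prob n k l = (f k l + f k l * of_bool (k = l)) / ((real n + 2) * (real n + 1))"
    for k l
    unfolding conformal_pair_prob_def by auto
  then show ?thesis
    unfolding K_def by (simp add: sum_divide_distrib[symmetric] sum.distrib)
qed

lemma conformal_rank_restrict:
  assumes "Cal \<subseteq> I" "m \<in> I"
  shows "conformal_rank Cal (restrict y I) m = conformal_rank Cal y m"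
  unfolding conformal_rank_def using assms by (auto intro!: arg_cong[where f = card])

lemma sets_Collect_eq_pair:
  assumes "f \<in> measurable M (count_space UNIV)" "g \<in> measurable M (count_space UNIV)"
  shows "{x\<in>space M. f x = p \<and> g x = q} \<in> sets M"
proof -
  have "{x\<in>space M. f x = p \<and> g x = q} = (f -` {p} \<inter> space M) \<inter> (g -` {q} \<inter> space M)"
    by auto
  then show ?thesis
    using measurable_sets[OF assms(1)] measurable_sets[OF assms(2)] by auto
qed

lemma sum_squares_centered_pos:
  fixes g :: "'a \<Rightarrow> real"
  assumes "finite K" "k \<in> K" "l \<in> K" "g k \<noteq> g l"
  shows "(\<Sum>m\<in>K. (g m - c) * (g m - c)) > 0"
proof -
  obtain m where "m \<in> K" "g m - c \<noteq> 0"
    using assms(2-4) by (metis eq_iff_diff_eq_0)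
  then have "0 < (g m - c) * (g m - c)" by (metis not_real_square_gt_zero)
  also have "\<dots> \<le> (\<Sum>m\<in>K. (g m - c) * (g m - c))"
    using \<open>m \<in> K\<close> assms(1) by (intro member_le_sum) auto
  finally show ?thesis .
qed

lemma (in finite_measure) integral_finite_range:
  fixes h :: "'b \<Rightarrow> real"
  assumes "finite K" "\<And>x. x \<in> space M \<Longrightarrow> F x \<in> K"
    and "\<And>k. k \<in> K \<Longrightarrow> {x\<in>space M. F x = k} \<in> sets M"
  shows "(\<integral>x. h (F x) \<partial>M) = (\<Sum>k\<in>K. h k * measure M {x\<in>space M. F x = k})"
proof -
  have "(\<integral>x. h (F x) \<partial>M) = (\<integral>x. (\<Sum>k\<in>K. h k * indicator {x\<in>space M. F x = k} x) \<partial>M)"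
    using assms(1,2) by (intro Bochner_Integration.integral_cong) (auto simp: indicator_def)
  also have "\<dots> = (\<Sum>k\<in>K. h k * measure M {x\<in>space M. F x = k})"
    using assms(3) by (subst Bochner_Integration.integral_sum) (auto simp: less_top[symmetric])
  finally show ?thesis .
qed

lemma (in prob_space) indep_vars_imp_indep_var:
  assumes indep: "indep_vars M' X I" and "i \<in> I" "j \<in> I" "i \<noteq> j"
  shows "indep_var (M' i) (X i) (M' j) (X j)"
proof -
  have "indep_var (M' i) ((\<lambda>f. f i) \<circ> (\<lambda>\<omega>. restrict (\<lambda>i. X i \<omega>) {i}))
      (M' j) ((\<lambda>f. f j) \<circ> (\<lambda>\<omega>. restrict (\<lambda>i. X i \<omega>) {j}))"
    using assms by (intro indep_var_compose[OF indep_var_restrict[OF indep]] measurable_component_singleton) auto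
  then show ?thesis by (simp add: comp_def)
qed

lemma (in prob_space) AE_neq_indep_atomless:
  fixes U V :: "'a \<Rightarrow> 'b::{second_countable_topology, t2_space}"
  assumes indep: "indep_var borel U borel V" and atomless: "\<And>t. emeasure (distr M borel V) {t} = 0"
  shows "AE w in M. U w \<noteq> V w"
proof -
  have [measurable]: "U \<in> borel_measurable M" "V \<in> borel_measurable M"
    using indep by (auto dest: indep_var_rv1 indep_var_rv2)
  interpret V: prob_space "distr M borel V" by (rule prob_space_distr) simp
  define Diag where "Diag = {p \<in> space (borel \<Otimes>\<^sub>M borel :: ('b \<times> 'b) measure). fst p = snd p}"
  have Diag: "Diag \<in> sets (borel \<Otimes>\<^sub>M borel)"
    unfolding Diag_def by (rule measurable_equality_set[OF measurable_fst measurable_snd])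
  have "emeasure M {w\<in>space M. U w = V w} = emeasure (distr M (borel \<Otimes>\<^sub>M borel) (\<lambda>w. (U w, V w))) Diag"
    by (subst emeasure_distr[OF _ Diag]) (auto simp: Diag_def space_pair_measure intro!: arg_cong[where f="emeasure M"])
  also have "\<dots> = emeasure (distr M borel U \<Otimes>\<^sub>M distr M borel V) Diag"
    using indep by (simp add: indep_var_distribution_eq)
  also have "\<dots> = (\<integral>\<^sup>+x. emeasure (distr M borel V) (Pair x -` Diag) \<partial>distr M borel U)"
    using Diag by (intro V.emeasure_pair_measure_alt) simp
  also have "\<dots> = 0"
    using atomless by (simp add: Diag_def space_pair_measure vimage_def)
  finally show ?thesis
    by (intro AE_I'[of "{w\<in>space M. U w = V w}"]) auto
qed

lemma correl_distr:
  fixes f g :: "'b \<Rightarrow> real"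
  assumes T: "T \<in> measurable M N" and f: "f \<in> borel_measurable N" and g: "g \<in> borel_measurable N"
  shows "correl M (\<lambda>w. f (T w)) (\<lambda>w. g (T w)) = correl (distr M N T) f g"
proof -
  have covar: "covar M (\<lambda>w. u (T w)) (\<lambda>w. v (T w)) = covar (distr M N T) u v"
    if [measurable]: "u \<in> borel_measurable N" "v \<in> borel_measurable N" for u v
    unfolding covar_def using T by (simp add: integral_distr)
  show ?thesis
    unfolding correl_def using covar f g by simp
qed

lemma emeasure_distr_singleton_eq_0:
  fixes s :: "'a::topological_space \<Rightarrow> 'b::t1_space"
  assumes "finite_measure P" "sets P = sets borel" "s \<in> borel_measurable borel"
    and "\<And>t. measure P (s -` {t}) = 0"
  shows "emeasure (distr P borel s) {t} = 0"
proof -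
  have "space P = UNIV" using sets_eq_imp_space_eq[OF assms(2)] by simp
  moreover have "s \<in> borel_measurable P"
    by (subst measurable_cong_sets[OF assms(2) refl]) (rule assms(3))
  ultimately have "emeasure (distr P borel s) {t} = emeasure P (s -` {t})"
    by (subst emeasure_distr) (auto intro: borel_closed)
  then show ?thesis
    using assms(1,4) by (simp add: finite_measure.emeasure_eq_measure)
qed

locale exchangeable_scores = prob_space N
  for N :: "(nat \<Rightarrow> real) measure" and I :: "nat set" +
  assumes sets_eq: "sets N = sets (\<Pi>\<^sub>M i\<in>I. borel)"
    and finite_index: "finite I"
    and AE_no_ties: "\<And>m m'. m \<in> I \<Longrightarrow> m' \<in> I \<Longrightarrow> m \<noteq> m' \<Longrightarrow> AE y in N. y m \<noteq> y m'"
    and distr_reindex: "\<And>\<pi>. bij_betw \<pi> I I \<Longrightarrow> distr N N (\<lambda>y. \<lambda>k\<in>I. y (\<pi> k)) = N"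
begin

lemma AE_inj_on: "AE y in N. inj_on y I"
proof -
  have "AE y in N. \<forall>m\<in>I. \<forall>m'\<in>I. m \<noteq> m' \<longrightarrow> y m \<noteq> y m'"
    using AE_no_ties finite_index by (intro eventually_ball_finite ballI) auto
  then show ?thesis by eventually_elim (auto intro: inj_onI)
qed

lemma measurable_card_le:
  assumes "C \<subseteq> I" "m \<in> I"
  shows "(\<lambda>y. card {i\<in>C. y i \<le> y m}) \<in> measurable N (count_space UNIV)"
  unfolding measurable_cong_sets[OF sets_eq refl]
proof (rule measurable_card)
  fix i
  show "{y\<in>space (PiM I (\<lambda>_. borel)). i \<in> {i\<in>C. y i \<le> y m}}
    \<in> sets (PiM I (\<lambda>_. borel :: real measure))"
  proof (cases "i \<in> C")
    case True
    then show ?thesis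
      using assms by (simp, intro borel_measurable_le measurable_component_singleton) auto
  qed simp
qed

lemma measurable_score_rank:
  assumes "m \<in> I"
  shows "(\<lambda>y. score_rank I y m) \<in> measurable N (count_space UNIV)"
  unfolding score_rank_def by (rule measurable_card_le[OF order_refl assms])

lemma sets_score_rank_pair:
  assumes "a \<in> I" "b \<in> I"
  shows "{y\<in>space N. score_rank I y a = p \<and> score_rank I y b = q} \<in> sets N"
  using measurable_score_rank[OF assms(1)] measurable_score_rank[OF assms(2)] by (rule sets_Collect_eq_pair)

lemma measurable_reindex:
  assumes "bij_betw \<pi> I I"
  shows "(\<lambda>y. \<lambda>k\<in>I. y (\<pi> k)) \<in> measurable N N"
  unfolding measurable_cong_sets[OF sets_eq sets_eq]
  using assms by (intro measurable_restrict measurable_component_singleton) (auto simp: bij_betw_def)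

lemma measure_score_rank_pair_reindex:
  assumes "bij_betw \<pi> I I" "a \<in> I" "b \<in> I"
  shows "measure N {y\<in>space N. score_rank I y a = p \<and> score_rank I y b = q} =
    measure N {y\<in>space N. score_rank I y (\<pi> a) = p \<and> score_rank I y (\<pi> b) = q}"
proof -
  let ?t = "\<lambda>y. \<lambda>k\<in>I. y (\<pi> k)"
  have t: "?t \<in> measurable N N" by (rule measurable_reindex[OF assms(1)])
  have "measure N {y\<in>space N. score_rank I y a = p \<and> score_rank I y b = q} =
      measure (distr N N ?t) {y\<in>space N. score_rank I y a = p \<and> score_rank I y b = q}"
    using distr_reindex[OF assms(1)] by simp
  also have "\<dots> = measure N (?t -` {y\<in>space N. score_rank I y a = p \<and> score_rank I y b = q} \<inter> space N)"
    using t assms(2,3) by (intro measure_distr sets_score_rank_pair) auto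
  also have "?t -` {y\<in>space N. score_rank I y a = p \<and> score_rank I y b = q} \<inter> space N =
      {y\<in>space N. score_rank I y (\<pi> a) = p \<and> score_rank I y (\<pi> b) = q}"
    using measurable_space[OF t] score_rank_reindex[OF assms(1)] assms(2,3) by auto
  finally show ?thesis .
qed

lemma sum_measure_offdiag_score_rank:
  assumes "p \<in> {1..card I}" "q \<in> {1..card I}" "p \<noteq> q"
  shows "(\<Sum>d\<in>Sigma I (\<lambda>u. I - {u}).
    measure N {y\<in>space N. score_rank I y (fst d) = p \<and> score_rank I y (snd d) = q}) = 1"
proof -
  define D where "D = Sigma I (\<lambda>u. I - {u})"
  define E where "E d = {y\<in>space N. score_rank I y (fst d) = p \<and> score_rank I y (snd d) = q}" for d
  have E_sets: "E d \<in> sets N" if "d \<in> D" for d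
    using that unfolding D_def E_def by (intro sets_score_rank_pair) auto
  have "(\<Sum>d\<in>D. measure N (E d)) = (\<integral>y. (\<Sum>d\<in>D. indicator (E d) y) \<partial>N)"
    using E_sets by (subst Bochner_Integration.integral_sum) (auto simp: less_top[symmetric])
  also have "\<dots> = (\<integral>y. 1 \<partial>N)"
  proof (rule integral_cong_AE)
    show "AE y in N. (\<Sum>d\<in>D. indicator (E d) y) = (1::real)"
      using AE_inj_on AE_space
    proof eventually_elim
      case (elim y)
      then have "(\<Sum>d\<in>D. indicator (E d) y) =
          (\<Sum>d\<in>D. of_bool (score_rank I y (fst d) = p \<and> score_rank I y (snd d) = q) :: real)"
        unfolding E_def by (intro sum.cong) (auto simp: indicator_def)
      also have "\<dots> = 1"
        unfolding D_def using sum_offdiag_score_rank[OF finite_index elim(1) assms] .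
      finally show ?case .
    qed
  qed (use E_sets in auto)
  finally show ?thesis
    unfolding D_def E_def using prob_space by simp
qed

lemma measure_score_rank_pair:
  assumes "a \<in> I" "b \<in> I" "a \<noteq> b" "p \<in> {1..card I}" "q \<in> {1..card I}" "p \<noteq> q"
  shows "measure N {y\<in>space N. score_rank I y a = p \<and> score_rank I y b = q} =
    1 / (real (card I) * (real (card I) - 1))"
proof -
  \<comment> \<open>Exchangeability makes all off-diagonal index pairs equally likely to carry the ranks (p, q),
     and almost surely exactly one of them does.\<close>
  define \<mu> where "\<mu> = measure N {y\<in>space N. score_rank I y a = p \<and> score_rank I y b = q}"
  have "measure N {y\<in>space N. score_rank I y (fst d) = p \<and> score_rank I y (snd d) = q} = \<mu>"
    if d: "d \<in> Sigma I (\<lambda>u. I - {u})" for d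
  proof -
    obtain \<pi> where "bij_betw \<pi> I I" "\<pi> a = fst d" "\<pi> b = snd d"
      using exists_bij_betw_pair[OF assms(1-3), of "fst d" "snd d"] d by force
    then show ?thesis
      unfolding \<mu>_def using measure_score_rank_pair_reindex assms(1,2) by simp
  qed
  then have "real (card (Sigma I (\<lambda>u. I - {u}))) * \<mu> = 1"
    using sum_measure_offdiag_score_rank[OF assms(4-6)] by simp
  moreover have "card I \<ge> 1" using assms(1) finite_index by (auto simp: Suc_le_eq card_gt_0_iff)
  ultimately have "real (card I) * (real (card I) - 1) * \<mu> = 1"
    by (simp add: card_offdiag[OF finite_index])
  then show ?thesis
    unfolding \<mu>_def by (auto simp: eq_divide_eq mult.commute)
qed

lemma measurable_conformal_rank:
  assumes "Cal \<subseteq> I" "m \<in> I"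
  shows "(\<lambda>y. conformal_rank Cal y m) \<in> measurable N (count_space UNIV)"
  unfolding conformal_rank_def using measurable_card_le[OF assms] by (rule measurable_compose) simp

lemma measure_conformal_rank_pair:
  assumes I: "I = Cal \<union> {a, b}" and ab: "a \<notin> Cal" "b \<notin> Cal" "a \<noteq> b"
    and kl: "k \<in> {1..card Cal + 1}" "l \<in> {1..card Cal + 1}"
  shows "measure N {y\<in>space N. conformal_rank Cal y a = k \<and> conformal_rank Cal y b = l} =
    conformal_pair_prob (card Cal) k l"
proof -
  have Cal: "finite Cal" "Cal \<subseteq> I" and abI: "a \<in> I" "b \<in> I"
    using finite_index I by auto
  have card_I: "card I = card Cal + 2"
    using I ab Cal(1) by (simp add: card_insert_if)
  define c where "c = 1 / ((real (card Cal) + 2) * (real (card Cal) + 1))"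
  define A1 where "A1 = {y\<in>space N. k \<le> l \<and> score_rank I y a = k \<and> score_rank I y b = l + 1}"
  define A2 where "A2 = {y\<in>space N. l \<le> k \<and> score_rank I y a = k + 1 \<and> score_rank I y b = l}"
  have A1_sets: "A1 \<in> sets N"
    unfolding A1_def using sets_score_rank_pair[OF abI, of k "l + 1"] by (cases "k \<le> l") simp_all
  have A2_sets: "A2 \<in> sets N"
    unfolding A2_def using sets_score_rank_pair[OF abI, of "k + 1" l] by (cases "l \<le> k") simp_all
  have A1: "measure N A1 = (if k \<le> l then c else 0)"
    using measure_score_rank_pair[OF abI ab(3), of k "l + 1"] kl card_I
    unfolding A1_def c_def by (auto simp: algebra_simps)
  have A2: "measure N A2 = (if l \<le> k then c else 0)"
    using measure_score_rank_pair[OF abI ab(3), of "k + 1" l] kl card_I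
    unfolding A2_def c_def by (auto simp: algebra_simps)
  have "measure N {y\<in>space N. conformal_rank Cal y a = k \<and> conformal_rank Cal y b = l} =
      measure N (A1 \<union> A2)"
  proof (rule measure_eq_AE)
    show "AE y in N. (y \<in> {y\<in>space N. conformal_rank Cal y a = k \<and> conformal_rank Cal y b = l}) =
        (y \<in> A1 \<union> A2)"
      using AE_no_ties[OF abI ab(3)] AE_space
      by eventually_elim (simp add: A1_def A2_def conformal_rank_pair_iff[OF Cal(1) ab(1,2) _ I])
    show "{y\<in>space N. conformal_rank Cal y a = k \<and> conformal_rank Cal y b = l} \<in> sets N"
      using measurable_conformal_rank[OF Cal(2) abI(1)] measurable_conformal_rank[OF Cal(2) abI(2)]
      by (rule sets_Collect_eq_pair)
  qed (use A1_sets A2_sets in blast)+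
  also have "\<dots> = measure N A1 + measure N A2"
    by (rule finite_measure_Union[OF A1_sets A2_sets]) (auto simp: A1_def A2_def)
  finally show ?thesis
    unfolding A1 A2 conformal_pair_prob_def c_def by (cases k l rule: linorder_cases) simp_all
qed

lemma integral_conformal_rank_pair:
  fixes f :: "nat \<Rightarrow> nat \<Rightarrow> real"
  assumes I: "I = Cal \<union> {a, b}" and ab: "a \<notin> Cal" "b \<notin> Cal" "a \<noteq> b"
  defines "K \<equiv> {1..card Cal + 1}"
  shows "(\<integral>y. f (conformal_rank Cal y a) (conformal_rank Cal y b) \<partial>N) =
    (\<Sum>k\<in>K. \<Sum>l\<in>K. f k l * conformal_pair_prob (card Cal) k l)"
proof -
  have Cal: "finite Cal" "Cal \<subseteq> I" and abI: "a \<in> I" "b \<in> I"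
    using finite_index I by auto
  let ?R = "\<lambda>y. (conformal_rank Cal y a, conformal_rank Cal y b)"
  have "(\<integral>y. case_prod f (?R y) \<partial>N) =
      (\<Sum>kl\<in>K \<times> K. case_prod f kl * measure N {y\<in>space N. ?R y = kl})"
  proof (rule integral_finite_range)
    show "?R y \<in> K \<times> K" for y
      unfolding K_def using conformal_rank_mem[OF Cal(1)] by auto
    show "{y\<in>space N. ?R y = kl} \<in> sets N" for kl
      using sets_Collect_eq_pair[OF measurable_conformal_rank[OF Cal(2) abI(1)] measurable_conformal_rank[OF Cal(2) abI(2)]]
      by (cases kl) simp
  qed (simp add: K_def)
  also have "\<dots> = (\<Sum>k\<in>K. \<Sum>l\<in>K. f k l * conformal_pair_prob (card Cal) k l)"
    unfolding sum.cartesian_product K_def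
    by (intro sum.cong) (auto simp: measure_conformal_rank_pair[OF I ab])
  finally show ?thesis by simp
qed

lemma correl_conformal_ranks:
  fixes g :: "nat \<Rightarrow> real"
  assumes I: "I = Cal \<union> {a, b}" and ab: "a \<notin> Cal" "b \<notin> Cal" "a \<noteq> b"
    and nonconst: "\<exists>k\<in>{1..card Cal + 1}. \<exists>l\<in>{1..card Cal + 1}. g k \<noteq> g l"
  shows "correl N (\<lambda>y. g (conformal_rank Cal y a)) (\<lambda>y. g (conformal_rank Cal y b)) =
    1 / (real (card Cal) + 2)"
proof -
  define n where "n = card Cal"
  define K where "K = {1..n + 1}"
  define \<mu> where "\<mu> = (\<Sum>k\<in>K. g k) / (real n + 1)"
  define h where "h k = g k - \<mu>" for k
  define S where "S = (\<Sum>k\<in>K. h k * h k)"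
  have E: "(\<integral>y. f (conformal_rank Cal y a) (conformal_rank Cal y b) \<partial>N) =
      ((\<Sum>k\<in>K. \<Sum>l\<in>K. f k l) + (\<Sum>k\<in>K. f k k)) / ((real n + 2) * (real n + 1))" for f
    unfolding integral_conformal_rank_pair[OF I ab] K_def n_def by (rule sum_conformal_pair_prob)
  have card_K: "card K = n + 1" unfolding K_def by simp
  have sum_const: "(\<Sum>k\<in>K. \<Sum>l\<in>K. f k) = (real n + 1) * (\<Sum>k\<in>K. f k)"
    "(\<Sum>k\<in>K. \<Sum>l\<in>K. f l) = (real n + 1) * (\<Sum>k\<in>K. f k)" for f :: "nat \<Rightarrow> real"
    using card_K by (simp_all add: sum_distrib_left add.commute)
  have cancel: "((real n + 1) * x + x) / ((real n + 2) * (real n + 1)) = x / (real n + 1)" for x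
  proof -
    have "(real n + 1) * x + x = (real n + 2) * x" by algebra
    then show ?thesis by simp
  qed
  have mean_a: "(\<integral>y. g (conformal_rank Cal y a) \<partial>N) = \<mu>"
    unfolding E[of "\<lambda>k l. g k"] sum_const cancel \<mu>_def ..
  have mean_b: "(\<integral>y. g (conformal_rank Cal y b) \<partial>N) = \<mu>"
    unfolding E[of "\<lambda>k l. g l"] sum_const cancel \<mu>_def ..
  have "(\<Sum>k\<in>K. h k) = 0"
    unfolding h_def \<mu>_def using card_K by (simp add: sum_subtractf add.commute)
  then have cov: "covar N (\<lambda>y. g (conformal_rank Cal y a)) (\<lambda>y. g (conformal_rank Cal y b)) =
      S / ((real n + 2) * (real n + 1))"
    unfolding covar_def mean_a mean_b h_def[symmetric] E[of "\<lambda>k l. h k * h l"] S_def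
    by (simp add: sum_product[symmetric])
  have var_a: "covar N (\<lambda>y. g (conformal_rank Cal y a)) (\<lambda>y. g (conformal_rank Cal y a)) = S / (real n + 1)"
    unfolding covar_def mean_a h_def[symmetric] E[of "\<lambda>k l. h k * h k"] sum_const cancel S_def ..
  have var_b: "covar N (\<lambda>y. g (conformal_rank Cal y b)) (\<lambda>y. g (conformal_rank Cal y b)) = S / (real n + 1)"
    unfolding covar_def mean_b h_def[symmetric] E[of "\<lambda>k l. h l * h l"] sum_const cancel S_def ..
  obtain k l where "k \<in> K" "l \<in> K" "g k \<noteq> g l"
    using nonconst unfolding K_def n_def by blast
  then have "S > 0"
    unfolding S_def h_def by (intro sum_squares_centered_pos) (auto simp: K_def)
  then have "sqrt (S / (real n + 1) * (S / (real n + 1))) = S / (real n + 1)"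
    by (subst real_sqrt_abs2) simp
  moreover have "S / ((real n + 2) * (real n + 1)) = S / (real n + 1) * (1 / (real n + 2))"
    by simp
  ultimately show ?thesis
    unfolding correl_def cov var_a var_b n_def[symmetric] using \<open>S > 0\<close> by simp
qed

end

lemma exchangeable_scores_iid:
  fixes Y :: "nat \<Rightarrow> 'w \<Rightarrow> real"
  assumes "prob_space M" "finite I" "I \<noteq> {}" and indep: "prob_space.indep_vars M (\<lambda>_. borel) Y I"
    and distr_Y: "\<And>k. k \<in> I \<Longrightarrow> distr M borel (Y k) = Q" and atomless: "\<And>t. emeasure Q {t} = 0"
  shows "exchangeable_scores (distr M (\<Pi>\<^sub>M i\<in>I. borel) (\<lambda>w. \<lambda>k\<in>I. Y k w)) I"
proof -
  interpret M: prob_space M by fact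
  have Y: "Y k \<in> borel_measurable M" if "k \<in> I" for k
    using indep that by (auto simp: M.indep_vars_def)
  obtain k0 where "k0 \<in> I" using \<open>I \<noteq> {}\<close> by blast
  then have "prob_space Q"
    using M.prob_space_distr[OF Y] distr_Y by metis
  have "distr M (\<Pi>\<^sub>M i\<in>I. borel) (\<lambda>w. \<lambda>k\<in>I. Y k w) = (\<Pi>\<^sub>M k\<in>I. distr M borel (Y k))"
    using M.indep_vars_iff_distr_eq_PiM'[OF \<open>I \<noteq> {}\<close>, where M'="\<lambda>_. borel" and X=Y] Y indep by simp
  also have "\<dots> = (\<Pi>\<^sub>M i\<in>I. Q)"
    by (rule PiM_cong) (simp_all add: distr_Y)
  finally have law: "distr M (\<Pi>\<^sub>M i\<in>I. borel) (\<lambda>w. \<lambda>k\<in>I. Y k w) = (\<Pi>\<^sub>M i\<in>I. Q)" .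
  show ?thesis
  proof (intro exchangeable_scores.intro exchangeable_scores_axioms.intro)
    show "prob_space (distr M (\<Pi>\<^sub>M i\<in>I. borel) (\<lambda>w. \<lambda>k\<in>I. Y k w))"
      by (rule M.prob_space_distr) (auto intro!: measurable_restrict Y)
    show "finite I" by fact
    show "sets (distr M (\<Pi>\<^sub>M i\<in>I. borel) (\<lambda>w. \<lambda>k\<in>I. Y k w)) = sets (\<Pi>\<^sub>M i\<in>I. borel)"
      by simp
    fix m m' assume "m \<in> I" "m' \<in> I" "m \<noteq> m'"
    then have "AE w in M. Y m w \<noteq> Y m' w"
      using atomless distr_Y
      by (intro M.AE_neq_indep_atomless M.indep_vars_imp_indep_var[OF indep]) auto
    moreover have "{y\<in>space (\<Pi>\<^sub>M i\<in>I. borel). y m \<noteq> y m'}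
      \<in> sets (\<Pi>\<^sub>M i\<in>I. borel :: real measure)"
      using \<open>m \<in> I\<close> \<open>m' \<in> I\<close>
      by (intro sets.sets_Collect_neg measurable_equality_set measurable_component_singleton)
    ultimately show "AE y in distr M (\<Pi>\<^sub>M i\<in>I. borel) (\<lambda>w. \<lambda>k\<in>I. Y k w). y m \<noteq> y m'"
      using \<open>m \<in> I\<close> \<open>m' \<in> I\<close> by (subst AE_distr_iff) (auto intro!: measurable_restrict Y)
  next
    fix \<pi> assume "bij_betw \<pi> I I"
    with \<open>prob_space Q\<close> show "distr (distr M (\<Pi>\<^sub>M i\<in>I. borel) (\<lambda>w. \<lambda>k\<in>I. Y k w))
        (distr M (\<Pi>\<^sub>M i\<in>I. borel) (\<lambda>w. \<lambda>k\<in>I. Y k w)) (\<lambda>y. \<lambda>k\<in>I. y (\<pi> k)) =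
      distr M (\<Pi>\<^sub>M i\<in>I. borel) (\<lambda>w. \<lambda>k\<in>I. Y k w)"
      unfolding law by (intro distr_PiM_reindex) (auto simp: bij_betw_def)
  qed
qed

lemma exchangeable_scores_score_iid:
  fixes X :: "nat \<Rightarrow> 'w \<Rightarrow> 'a::topological_space" and s :: "'a \<Rightarrow> real"
  assumes "prob_space M" "prob_space P" "sets P = sets borel" "s \<in> borel_measurable borel"
    and "\<And>t. measure P (s -` {t}) = 0"
    and "finite I" "I \<noteq> {}" and indep: "prob_space.indep_vars M (\<lambda>_. borel) X I"
    and distr_X: "\<And>k. k \<in> I \<Longrightarrow> distr M borel (X k) = P"
  shows "exchangeable_scores (distr M (\<Pi>\<^sub>M k\<in>I. borel) (\<lambda>w. \<lambda>k\<in>I. s (X k w))) I"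
proof (rule exchangeable_scores_iid)
  interpret M: prob_space M by fact
  show "M.indep_vars (\<lambda>_. borel) (\<lambda>k w. s (X k w)) I"
    using indep by (rule M.indep_vars_compose2) (rule assms(4))
  show "distr M borel (\<lambda>w. s (X k w)) = distr P borel s" if "k \<in> I" for k
    using distr_X[OF that] distr_distr[OF assms(4), of "X k" M] indep that
    by (simp add: M.indep_vars_def comp_def)
  show "emeasure (distr P borel s) {t} = 0" for t
    using prob_space.finite_measure[OF assms(2)] assms(3-5) by (rule emeasure_distr_singleton_eq_0)
qed fact+

lemma umarg_eq_conformal_rank:
  "umarg n s X w (X m w) = real (conformal_rank {n+1..2*n} (\<lambda>k. s (X k w)) m) / (real n + 1)"
  unfolding umarg_def conformal_rank_def by simp

theorem lemma1:
  fixes M :: "'w measure" and P :: "(real^'d) measure"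
    and X :: "nat \<Rightarrow> 'w \<Rightarrow> real^'d" and s :: "real^'d \<Rightarrow> real"
    and G :: "real \<Rightarrow> real" and n i j :: nat
  assumes "prob_space M" and "prob_space P" and "sets P = sets borel"
    and "s \<in> borel_measurable borel"
    and cont: "\<And>t. measure P (s -` {t}) = 0"
    and "i \<ge> 1" and "j \<ge> 1" and "i \<noteq> j"
    and indep: "prob_space.indep_vars M (\<lambda>_. borel) X ({n+1..2*n} \<union> {2*n+i, 2*n+j})"
    and distr: "\<And>k. k \<in> {n+1..2*n} \<union> {2*n+i, 2*n+j} \<Longrightarrow> distr M borel (X k) = P"
    and nonconst: "\<exists>k\<in>{1..n+1}. \<exists>l\<in>{1..n+1}. G (real k / (real n + 1)) \<noteq> G (real l / (real n + 1))"
  shows "correl M (\<lambda>w. G (umarg n s X w (X (2*n+i) w))) (\<lambda>w. G (umarg n s X w (X (2*n+j) w)))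
         = 1 / (real n + 2)"
proof -
  interpret M: prob_space M by fact
  define I where "I = {n+1..2*n} \<union> {2*n+i, 2*n+j}"
  define Yv where "Yv w = (\<lambda>k\<in>I. s (X k w))" for w
  define g where "g k = G (real k / (real n + 1))" for k
  interpret exchangeable_scores "distr M (\<Pi>\<^sub>M k\<in>I. borel) Yv" I
    unfolding Yv_def I_def by (rule exchangeable_scores_score_iid[OF assms(1-5) _ _ indep distr]) auto
  have Yv_meas: "Yv \<in> measurable M (\<Pi>\<^sub>M k\<in>I. borel)"
    using indep assms(4) unfolding Yv_def I_def M.indep_vars_def by (auto intro!: measurable_restrict)
  have rank_meas: "(\<lambda>y. g (conformal_rank {n+1..2*n} y m)) \<in> borel_measurable (\<Pi>\<^sub>M k\<in>I. borel)"
    if "m \<in> I" for m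
    using that by (intro measurable_compose[OF measurable_conformal_rank[unfolded measurable_distr_eq1]])
      (auto simp: I_def)
  have "G (umarg n s X w (X m w)) = g (conformal_rank {n+1..2*n} (Yv w) m)" if "m \<in> I" for w m
    using that unfolding Yv_def g_def umarg_eq_conformal_rank by (subst conformal_rank_restrict) (auto simp: I_def)
  then have "correl M (\<lambda>w. G (umarg n s X w (X (2*n+i) w))) (\<lambda>w. G (umarg n s X w (X (2*n+j) w))) =
      correl (distr M (\<Pi>\<^sub>M k\<in>I. borel) Yv) (\<lambda>y. g (conformal_rank {n+1..2*n} y (2*n+i)))
        (\<lambda>y. g (conformal_rank {n+1..2*n} y (2*n+j)))"
    using correl_distr[OF Yv_meas rank_meas rank_meas] by (simp add: I_def)
  also have "\<dots> = 1 / (real n + 2)"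
    using nonconst assms(6-8) by (subst correl_conformal_ranks) (auto simp: I_def g_def)
  finally show ?thesis .
qed

end
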